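(* Let $(H,\Delta,\Delta')$ be a Hopf brace over a field $k$, with first antipode $S$. Then for every $h\in H$, $$S(h_1)_{1'}\,h_2\otimes S(h_1)_{2'}=S(h_1)\,h_{21'}\otimes S(h_{22'}).$$
   Context: All objects are over a field $k$. A Hopf brace $(H,\Delta,\Delta')$ consists of an algebra $(H,m,1)$ together with two Hopf algebra structures $(H,m,1,\Delta,\varepsilon,S)$ and $(H,m,1,\Delta',\epsilon,T)$ on the same algebra, satisfying for all $h\in H$ $$h_{1'}\otimes h_{2'1}\otimes h_{2'2}=h_{11'}\,S(h_2)\,h_{31'}\otimes h_{12'}\otimes h_{32'}.$$ Sweedler notation: $\Delta(h)=h_1\otimes h_2$, $\Delta'(h)=h_{1'}\otimes h_{2'}$ (summation omitted); iterated indices such as $h_{21'}\otimes h_{22'}$ mean: apply $\Delta$ to $h$, then $\Delta'$ to the second tensor factor $h_2$; $S(h_1)_{1'}\otimes S(h_1)_{2'}$ denotes $\Delta'(S(h_1))$. *)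

theory Defs
  imports Complex_Main
begin

text \<open>
Elements of H \<otimes> H and
H \<otimes> H \<otimes> H are represented by finite lists of pairs / triples (a list xs stands
for the tensor sum of a \<otimes> b over (a,b) in xs).  Two such representatives denote the
same tensor iff they agree under all pairings with products of linear functionals
H \<rightarrow> k; over a field these pairings separate points of the tensor product, so this
is exactly equality in H \<otimes> H (resp. H \<otimes> H \<otimes> H).  A comultiplication is a map
Delta :: 'h \<Rightarrow> ('h \<times> 'h) list choosing a representative of Delta(h); its linearity
is required up to this equality, which makes iterated Sweedler expressions well
defined.
\<close>

definition lin_fun :: "('k::field \<Rightarrow> 'h::ab_group_add \<Rightarrow> 'h) \<Rightarrow> ('h \<Rightarrow> 'k) \<Rightarrow> bool" where
  "lin_fun scale f \<longleftrightarrow> Vector_Spaces.linear scale (*) f"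

definition teq2 :: "('k::field \<Rightarrow> 'h::ab_group_add \<Rightarrow> 'h) \<Rightarrow> ('h \<times> 'h) list \<Rightarrow> ('h \<times> 'h) list \<Rightarrow> bool" where
  "teq2 scale xs ys \<longleftrightarrow>
     (\<forall>f g. lin_fun scale f \<longrightarrow> lin_fun scale g \<longrightarrow>
        (\<Sum>(a,b)\<leftarrow>xs. f a * g b) = (\<Sum>(a,b)\<leftarrow>ys. f a * g b))"

definition teq3 :: "('k::field \<Rightarrow> 'h::ab_group_add \<Rightarrow> 'h) \<Rightarrow> ('h \<times> 'h \<times> 'h) list \<Rightarrow> ('h \<times> 'h \<times> 'h) list \<Rightarrow> bool" where
  "teq3 scale xs ys \<longleftrightarrow>
     (\<forall>f g l. lin_fun scale f \<longrightarrow> lin_fun scale g \<longrightarrow> lin_fun scale l \<longrightarrow>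
        (\<Sum>(a,b,c)\<leftarrow>xs. f a * g b * l c) = (\<Sum>(a,b,c)\<leftarrow>ys. f a * g b * l c))"

definition algebra_k :: "('k::field \<Rightarrow> 'h::ab_group_add \<Rightarrow> 'h) \<Rightarrow> ('h \<Rightarrow> 'h \<Rightarrow> 'h) \<Rightarrow> 'h \<Rightarrow> bool" where
  "algebra_k scale m one \<longleftrightarrow>
     vector_space scale \<and>
     (\<forall>x y z. m (x + y) z = m x z + m y z) \<and>
     (\<forall>x y z. m x (y + z) = m x y + m x z) \<and>
     (\<forall>c x y. m (scale c x) y = scale c (m x y)) \<and>
     (\<forall>c x y. m x (scale c y) = scale c (m x y)) \<and>
     (\<forall>x y z. m (m x y) z = m x (m y z)) \<and>
     (\<forall>x. m one x = x \<and> m x one = x)"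

definition hopf_alg :: "('k::field \<Rightarrow> 'h::ab_group_add \<Rightarrow> 'h) \<Rightarrow> ('h \<Rightarrow> 'h \<Rightarrow> 'h) \<Rightarrow> 'h
    \<Rightarrow> ('h \<Rightarrow> ('h \<times> 'h) list) \<Rightarrow> ('h \<Rightarrow> 'k) \<Rightarrow> ('h \<Rightarrow> 'h) \<Rightarrow> bool" where
  "hopf_alg scale m one D eps S \<longleftrightarrow>
     \<comment> \<open>Delta linear\<close>
     (\<forall>c x y. teq2 scale (D (scale c x + y)) (map (\<lambda>(a,b). (scale c a, b)) (D x) @ D y)) \<and>
     \<comment> \<open>coassociativity\<close>
     (\<forall>h. teq3 scale [(a1, a2, b). (a,b) \<leftarrow> D h, (a1,a2) \<leftarrow> D a]
                     [(a, b1, b2). (a,b) \<leftarrow> D h, (b1,b2) \<leftarrow> D b]) \<and>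
     \<comment> \<open>counit: linear, counit axioms\<close>
     lin_fun scale eps \<and>
     (\<forall>h. (\<Sum>(a,b)\<leftarrow>D h. scale (eps a) b) = h) \<and>
     (\<forall>h. (\<Sum>(a,b)\<leftarrow>D h. scale (eps b) a) = h) \<and>
     \<comment> \<open>Delta and eps are algebra maps\<close>
     (\<forall>x y. teq2 scale (D (m x y)) [(m a c, m b d). (a,b) \<leftarrow> D x, (c,d) \<leftarrow> D y]) \<and>
     teq2 scale (D one) [(one, one)] \<and>
     (\<forall>x y. eps (m x y) = eps x * eps y) \<and>
     eps one = 1 \<and>
     \<comment> \<open>antipode\<close>
     Vector_Spaces.linear scale scale S \<and>
     (\<forall>h. (\<Sum>(a,b)\<leftarrow>D h. m (S a) b) = scale (eps h) one) \<and>
     (\<forall>h. (\<Sum>(a,b)\<leftarrow>D h. m a (S b)) = scale (eps h) one)"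

text \<open>Hopf brace (H, Delta, Delta'): compatibility
  h_{1'} \<otimes> h_{2'1} \<otimes> h_{2'2} = h_{11'} S(h_2) h_{31'} \<otimes> h_{12'} \<otimes> h_{32'}.\<close>
definition hopf_brace :: "('k::field \<Rightarrow> 'h::ab_group_add \<Rightarrow> 'h) \<Rightarrow> ('h \<Rightarrow> 'h \<Rightarrow> 'h) \<Rightarrow> 'h
    \<Rightarrow> ('h \<Rightarrow> ('h \<times> 'h) list) \<Rightarrow> ('h \<Rightarrow> 'k) \<Rightarrow> ('h \<Rightarrow> 'h)
    \<Rightarrow> ('h \<Rightarrow> ('h \<times> 'h) list) \<Rightarrow> ('h \<Rightarrow> 'k) \<Rightarrow> ('h \<Rightarrow> 'h) \<Rightarrow> bool" where
  "hopf_brace scale m one D eps S D' eps' T \<longleftrightarrow>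
     algebra_k scale m one \<and>
     hopf_alg scale m one D eps S \<and>
     hopf_alg scale m one D' eps' T \<and>
     (\<forall>h. teq3 scale
        [(a, c, d). (a,b) \<leftarrow> D' h, (c,d) \<leftarrow> D b]
        [(m (m u1 (S h2)) w1, u2, w2). (x,h3) \<leftarrow> D h, (h1,h2) \<leftarrow> D x,
                                        (u1,u2) \<leftarrow> D' h1, (w1,w2) \<leftarrow> D' h3])"

end

theory Submission
  imports Defs
begin

text \<open>
  Work in the convolution algebra of linear maps \<open>H \<rightarrow> H \<otimes> H\<close>, convolution being taken
  with respect to the first coproduct \<open>\<Delta>\<close> and the product of the algebra \<open>H \<otimes> H\<close>; its
  unit is \<open>h \<mapsto> \<epsilon>(h) 1 \<otimes> 1\<close>. Put \<open>K = S \<otimes> 1\<close>, \<open>J = id \<otimes> 1\<close> and \<open>M = (id \<otimes> S)\<Delta>'\<close>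
  (below \<open>S_one\<close>, \<open>id_one\<close> and \<open>comult'_id_S\<close>). The two sides of the identity are
  \<open>(\<Delta>'S) * J\<close> and \<open>K * M\<close>. Applying \<open>id \<otimes> m(S \<otimes> id)\<close> to the brace compatibility gives
  \<open>(M * K) * \<Delta>' = J\<close>; on the left this uses \<open>\<epsilon>' = \<epsilon>\<close>, which in turn follows by applying
  \<open>\<epsilon>' \<otimes> \<epsilon>' \<otimes> \<epsilon>\<close> to the compatibility. Since \<open>K * J\<close> is the unit, \<open>K * M * K\<close> is a left
  convolution inverse of \<open>\<Delta>'\<close>; as \<open>\<Delta>'\<close> is multiplicative, \<open>\<Delta>'S\<close> is a right inverse. Hence
  \<open>\<Delta>'S = K * M * K\<close> and \<open>(\<Delta>'S) * J = K * M * (K * J) = K * M\<close>.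

  Tensors are represented by lists and compared by pairing with bilinear forms; over a field
  these pairings are determined by those with products of functionals, because finitely many
  vectors have finite coordinate expansions with respect to a basis.
\<close>

definition pairing :: "('h \<times> 'h) list \<Rightarrow> ('h \<Rightarrow> 'h \<Rightarrow> 'k::comm_monoid_add) \<Rightarrow> 'k" where
  "pairing xs \<beta> = (\<Sum>(a,b)\<leftarrow>xs. \<beta> a b)"

definition bilinear_form :: "('k::field \<Rightarrow> 'h::ab_group_add \<Rightarrow> 'h) \<Rightarrow> ('h \<Rightarrow> 'h \<Rightarrow> 'k) \<Rightarrow> bool" where
  "bilinear_form scale \<beta> \<longleftrightarrow> (\<forall>a. lin_fun scale (\<beta> a)) \<and> (\<forall>b. lin_fun scale (\<lambda>a. \<beta> a b))"

definition trilinear_form :: "('k::field \<Rightarrow> 'h::ab_group_add \<Rightarrow> 'h) \<Rightarrow> ('h \<Rightarrow> 'h \<Rightarrow> 'h \<Rightarrow> 'k) \<Rightarrow> bool" where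
  "trilinear_form scale \<tau> \<longleftrightarrow>
     (\<forall>b c. lin_fun scale (\<lambda>a. \<tau> a b c)) \<and> (\<forall>a c. lin_fun scale (\<lambda>b. \<tau> a b c)) \<and>
     (\<forall>a b. lin_fun scale (\<tau> a b))"

lemma lin_fun_vector_space: "lin_fun scale f \<Longrightarrow> vector_space scale"
  unfolding lin_fun_def Vector_Spaces.linear_iff by simp

lemma lin_fun_add: "lin_fun scale f \<Longrightarrow> f (x + y) = f x + f y"
  unfolding lin_fun_def Vector_Spaces.linear_iff by simp

lemma lin_fun_scale: "lin_fun scale f \<Longrightarrow> f (scale c x) = c * f x"
  unfolding lin_fun_def Vector_Spaces.linear_iff by simp

lemma lin_fun_zero: "lin_fun scale f \<Longrightarrow> f 0 = 0"
  using lin_fun_add[of scale f 0 0] by (metis add_cancel_right_right add_0)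

lemma lin_fun_sum: "lin_fun scale f \<Longrightarrow> f (\<Sum>e\<in>B. g e) = (\<Sum>e\<in>B. f (g e))"
  by (induction B rule: infinite_finite_induct) (auto simp: lin_fun_zero lin_fun_add)

lemma lin_fun_sum_list: "lin_fun scale f \<Longrightarrow> f (\<Sum>x\<leftarrow>xs. g x) = (\<Sum>x\<leftarrow>xs. f (g x))"
  by (induction xs) (auto simp: lin_fun_zero lin_fun_add)

lemma lin_fun_sum_list_prod:
  "lin_fun scale f \<Longrightarrow> f (\<Sum>(a, b)\<leftarrow>xs. g a b) = (\<Sum>(a, b)\<leftarrow>xs. f (g a b))"
  using lin_fun_sum_list[of scale f "\<lambda>(a, b). g a b" xs] by (simp add: case_prod_unfold)

lemma lin_funI:
  assumes "vector_space scale" "\<And>x y. f (x + y) = f x + f y" "\<And>c x. f (scale c x) = c * f x"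
  shows "lin_fun scale f"
proof -
  have "vector_space ((*) :: 'k::field \<Rightarrow> 'k \<Rightarrow> 'k)"
    by unfold_locales (auto simp: algebra_simps)
  then show ?thesis
    unfolding lin_fun_def Vector_Spaces.linear_iff using assms by blast
qed

lemma lin_fun_mult_right: "lin_fun scale f \<Longrightarrow> lin_fun scale (\<lambda>a. f a * c)"
  by (rule lin_funI[OF lin_fun_vector_space]) (auto simp: lin_fun_add lin_fun_scale algebra_simps)

lemma lin_fun_mult_left: "lin_fun scale f \<Longrightarrow> lin_fun scale (\<lambda>a. c * f a)"
  by (rule lin_funI[OF lin_fun_vector_space]) (auto simp: lin_fun_add lin_fun_scale algebra_simps)

lemma lin_fun_compose:
  "lin_fun scale f \<Longrightarrow> Vector_Spaces.linear scale scale g \<Longrightarrow> lin_fun scale (\<lambda>a. f (g a))"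
  unfolding lin_fun_def using Vector_Spaces.linear_compose[of scale scale g "(*)" f] by (simp add: o_def)

lemma finite_coordinate_expansion:
  fixes scale :: "'k::field \<Rightarrow> 'h::ab_group_add \<Rightarrow> 'h"
  assumes "vector_space scale" and "finite A"
  obtains B \<phi> where "finite B" "\<And>e. lin_fun scale (\<phi> e)"
    "\<And>a. a \<in> A \<Longrightarrow> a = (\<Sum>e\<in>B. scale (\<phi> e a) e)"
proof -
  interpret vector_space scale by fact
  obtain E where E: "E \<subseteq> UNIV" "independent E" "UNIV \<subseteq> span E"
    by (rule maximal_independent_subset)
  define B where "B = (\<Union>a\<in>A. {e. representation E a e \<noteq> 0})"
  show ?thesis
  proof (rule that)
    show "finite B"
      unfolding B_def using assms(2) finite_representation by blast
    show "lin_fun scale (\<lambda>a. representation E a e)" for e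
      unfolding lin_fun_def using linear_representation[OF E(2)] E(3) by auto
    show "a = (\<Sum>e\<in>B. scale (representation E a e) e)" if "a \<in> A" for a
    proof -
      have "(\<Sum>e\<in>B. scale (representation E a e) e)
          = (\<Sum>e | representation E a e \<noteq> 0. scale (representation E a e) e)"
        using \<open>finite B\<close> that by (intro sum.mono_neutral_right) (auto simp: B_def)
      also have "\<dots> = a"
        using sum_nonzero_representation_eq E(2,3) by blast
      finally show ?thesis by simp
    qed
  qed
qed

lemma sum_list_sum_swap: "(\<Sum>x\<leftarrow>xs. \<Sum>e\<in>B. f x e) = (\<Sum>e\<in>B. \<Sum>x\<leftarrow>xs. f x e)"
  by (induction xs) (auto simp: sum.distrib)

text \<open>Expanding the \<open>p\<close>-coordinate of every term in a basis reduces an identity of sums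
  to the case where that coordinate only enters through a linear functional.\<close>

lemma sum_list_eq_by_coordinates:
  fixes scale :: "'k::field \<Rightarrow> 'h::ab_group_add \<Rightarrow> 'h"
  assumes "vector_space scale"
    and lin: "\<And>x. lin_fun scale (\<lambda>a. F a x)"
    and eq: "\<And>f e. lin_fun scale f \<Longrightarrow> (\<Sum>x\<leftarrow>xs. f (p x) * F e x) = (\<Sum>x\<leftarrow>ys. f (p x) * F e x)"
  shows "(\<Sum>x\<leftarrow>xs. F (p x) x) = (\<Sum>x\<leftarrow>ys. F (p x) x)"
proof -
  obtain B \<phi> where "finite B" and lin_\<phi>: "\<And>e. lin_fun scale (\<phi> e)"
    and expand: "\<And>a. a \<in> p ` set (xs @ ys) \<Longrightarrow> a = (\<Sum>e\<in>B. scale (\<phi> e a) e)"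
    using finite_coordinate_expansion[OF assms(1), of "p ` set (xs @ ys)"] by blast
  have F_expand: "F (p x) x = (\<Sum>e\<in>B. \<phi> e (p x) * F e x)" if "x \<in> set (xs @ ys)" for x
  proof -
    have "F (p x) x = F (\<Sum>e\<in>B. scale (\<phi> e (p x)) e) x"
      using expand[of "p x"] that by (metis image_eqI)
    then show ?thesis by (simp add: lin_fun_sum[OF lin] lin_fun_scale[OF lin])
  qed
  have "(\<Sum>x\<leftarrow>xs. F (p x) x) = (\<Sum>e\<in>B. \<Sum>x\<leftarrow>xs. \<phi> e (p x) * F e x)"
    by (simp add: F_expand sum_list_sum_swap cong: map_cong)
  also have "\<dots> = (\<Sum>e\<in>B. \<Sum>x\<leftarrow>ys. \<phi> e (p x) * F e x)"
    by (simp add: eq[OF lin_\<phi>])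
  also have "\<dots> = (\<Sum>x\<leftarrow>ys. F (p x) x)"
    by (simp add: F_expand sum_list_sum_swap cong: map_cong)
  finally show ?thesis .
qed

lemma pairing_eq_if_teq2:
  assumes "vector_space scale" "teq2 scale xs ys" "bilinear_form scale \<beta>"
  shows "pairing xs \<beta> = pairing ys \<beta>"
proof -
  have "(\<Sum>x\<leftarrow>xs. \<beta> (fst x) (snd x)) = (\<Sum>x\<leftarrow>ys. \<beta> (fst x) (snd x))"
  proof (rule sum_list_eq_by_coordinates[OF assms(1), where p = fst and F = "\<lambda>a x. \<beta> a (snd x)"])
    show "lin_fun scale (\<lambda>a. \<beta> a (snd x))" for x
      using assms(3) unfolding bilinear_form_def by blast
    show "(\<Sum>x\<leftarrow>xs. f (fst x) * \<beta> e (snd x)) = (\<Sum>x\<leftarrow>ys. f (fst x) * \<beta> e (snd x))"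
      if "lin_fun scale f" for f e
      using assms(2,3) that unfolding teq2_def bilinear_form_def by (simp add: case_prod_unfold)
  qed
  then show ?thesis unfolding pairing_def by (simp add: case_prod_unfold)
qed

lemma teq2_if_pairing_eq:
  fixes scale :: "'k::field \<Rightarrow> 'h::ab_group_add \<Rightarrow> 'h"
  assumes "\<And>\<beta>. bilinear_form scale \<beta> \<Longrightarrow> pairing xs \<beta> = pairing ys \<beta>"
  shows "teq2 scale xs ys"
  unfolding teq2_def
proof (intro allI impI)
  fix f g :: "'h \<Rightarrow> 'k" assume "lin_fun scale f" "lin_fun scale g"
  then have "bilinear_form scale (\<lambda>a b. f a * g b)"
    unfolding bilinear_form_def by (blast intro: lin_fun_mult_left lin_fun_mult_right)
  then show "(\<Sum>(a,b)\<leftarrow>xs. f a * g b) = (\<Sum>(a,b)\<leftarrow>ys. f a * g b)"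
    using assms unfolding pairing_def by blast
qed

lemma sum3_eq_if_teq3:
  fixes scale :: "'k::field \<Rightarrow> 'h::ab_group_add \<Rightarrow> 'h"
  assumes vs: "vector_space scale" and eq: "teq3 scale xs ys" and \<tau>: "trilinear_form scale \<tau>"
  shows "(\<Sum>(a,b,c)\<leftarrow>xs. \<tau> a b c) = (\<Sum>(a,b,c)\<leftarrow>ys. \<tau> a b c)"
proof -
  have "(\<Sum>x\<leftarrow>xs. \<tau> (fst x) (fst (snd x)) (snd (snd x)))
      = (\<Sum>x\<leftarrow>ys. \<tau> (fst x) (fst (snd x)) (snd (snd x)))"
  proof (rule sum_list_eq_by_coordinates[OF vs, where p = fst and F = "\<lambda>a x. \<tau> a (fst (snd x)) (snd (snd x))"])
    show "lin_fun scale (\<lambda>a. \<tau> a (fst (snd x)) (snd (snd x)))" for x :: "'h \<times> 'h \<times> 'h"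
      using \<tau> unfolding trilinear_form_def by blast
    fix f e assume f: "lin_fun scale f"
    show "(\<Sum>x\<leftarrow>xs. f (fst x) * \<tau> e (fst (snd x)) (snd (snd x)))
        = (\<Sum>x\<leftarrow>ys. f (fst x) * \<tau> e (fst (snd x)) (snd (snd x)))"
    proof (rule sum_list_eq_by_coordinates[OF vs, where p = "\<lambda>x. fst (snd x)" and F = "\<lambda>b x. f (fst x) * \<tau> e b (snd (snd x))"])
      show "lin_fun scale (\<lambda>b. f (fst x) * \<tau> e b (snd (snd x)))" for x :: "'h \<times> 'h \<times> 'h"
        by (rule lin_fun_mult_left) (use \<tau> in \<open>simp add: trilinear_form_def\<close>)
      show "(\<Sum>x\<leftarrow>xs. g (fst (snd x)) * (f (fst x) * \<tau> e e' (snd (snd x))))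
          = (\<Sum>x\<leftarrow>ys. g (fst (snd x)) * (f (fst x) * \<tau> e e' (snd (snd x))))"
        if "lin_fun scale g" for g e'
        using eq f that \<tau> unfolding teq3_def trilinear_form_def
        by (simp add: case_prod_unfold mult_ac)
    qed
  qed
  then show ?thesis by (simp add: case_prod_unfold)
qed

lemma sum_list_map_concat: "sum_list (map f (concat xss)) = (\<Sum>xs\<leftarrow>xss. sum_list (map f xs))"
  by (induction xss) auto

lemma pairing_single [simp]: "pairing [(a, b)] \<beta> = \<beta> a b"
  by (simp add: pairing_def)

lemma pairing_append: "pairing (xs @ ys) \<beta> = pairing xs \<beta> + pairing ys \<beta>"
  by (simp add: pairing_def)

lemma pairing_cong: "(\<And>a b. \<beta> a b = \<gamma> a b) \<Longrightarrow> pairing xs \<beta> = pairing xs \<gamma>"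
  by (metis ext)

lemma pairing_swap:
  "pairing xs (\<lambda>a b. pairing ys (\<lambda>c d. f a b c d)) = pairing ys (\<lambda>c d. pairing xs (\<lambda>a b. f a b c d))"
  unfolding pairing_def by (induction xs) (simp_all add: case_prod_unfold sum_list_addf)

lemma pairing_mult_left: "pairing xs (\<lambda>a b. c * f a b) = (c::'a::semiring_0) * pairing xs f"
  unfolding pairing_def by (simp add: case_prod_unfold sum_list_const_mult)

lemma pairing_mult_right: "pairing xs (\<lambda>a b. f a b * c) = pairing xs f * (c::'a::semiring_0)"
  unfolding pairing_def by (simp add: case_prod_unfold sum_list_mult_const)

lemma bilinear_formI:
  "(\<And>a. lin_fun scale (\<beta> a)) \<Longrightarrow> (\<And>b. lin_fun scale (\<lambda>a. \<beta> a b)) \<Longrightarrow> bilinear_form scale \<beta>"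
  unfolding bilinear_form_def by blast

lemma bilinear_form_compose_left:
  "bilinear_form scale \<beta> \<Longrightarrow> Vector_Spaces.linear scale scale u \<Longrightarrow> lin_fun scale (\<lambda>a. \<beta> (u a) y)"
  unfolding bilinear_form_def by (auto intro: lin_fun_compose)

lemma bilinear_form_compose_right:
  "bilinear_form scale \<beta> \<Longrightarrow> Vector_Spaces.linear scale scale u \<Longrightarrow> lin_fun scale (\<lambda>a. \<beta> y (u a))"
  unfolding bilinear_form_def by (auto intro: lin_fun_compose)

lemma bilinear_form_scale_left: "bilinear_form scale \<beta> \<Longrightarrow> \<beta> (scale c a) b = c * \<beta> a b"
  unfolding bilinear_form_def using lin_fun_scale by metis

lemma pairing_scale_fst:
  "bilinear_form scale \<beta> \<Longrightarrow> pairing (map (\<lambda>(a, b). (scale c a, b)) xs) \<beta> = c * pairing xs \<beta>"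
  unfolding pairing_def
  by (simp add: bilinear_form_scale_left case_prod_unfold o_def sum_list_const_mult[symmetric])

lemma lin_fun_pairing:
  assumes "vector_space scale" "\<And>p q. lin_fun scale (\<lambda>a. \<beta> a p q)"
  shows "lin_fun scale (\<lambda>a. pairing xs (\<beta> a))"
proof (rule lin_funI[OF assms(1)])
  show "pairing xs (\<beta> (x + y)) = pairing xs (\<beta> x) + pairing xs (\<beta> y)" for x y
    unfolding pairing_def using lin_fun_add[OF assms(2)]
    by (simp add: sum_list_addf[symmetric] case_prod_unfold)
  show "pairing xs (\<beta> (scale c x)) = c * pairing xs (\<beta> x)" for c x
    unfolding pairing_def using lin_fun_scale[OF assms(2)]
    by (simp add: sum_list_const_mult[symmetric] case_prod_unfold)
qed

locale hopf_algebra_struct =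
  fixes scale :: "'k::field \<Rightarrow> 'h::ab_group_add \<Rightarrow> 'h"
    and m :: "'h \<Rightarrow> 'h \<Rightarrow> 'h" and one :: 'h
    and D :: "'h \<Rightarrow> ('h \<times> 'h) list" and eps :: "'h \<Rightarrow> 'k" and S :: "'h \<Rightarrow> 'h"
  assumes algebra: "algebra_k scale m one"
    and hopf: "hopf_alg scale m one D eps S"
begin

lemma
  shows vector_space: "vector_space scale"
    and mult_add_left: "m (x + y) z = m x z + m y z"
    and mult_add_right: "m x (y + z) = m x y + m x z"
    and mult_scale_left: "m (scale c x) y = scale c (m x y)"
    and mult_scale_right: "m x (scale c y) = scale c (m x y)"
    and mult_assoc: "m (m x y) z = m x (m y z)"
    and mult_one_left: "m one x = x"
    and mult_one_right: "m x one = x"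
  using algebra unfolding algebra_k_def by auto

lemma
  shows comult_add_scale: "teq2 scale (D (scale c x + y)) (map (\<lambda>(a, b). (scale c a, b)) (D x) @ D y)"
    and coassoc: "teq3 scale [(a1, a2, b). (a, b) \<leftarrow> D h, (a1, a2) \<leftarrow> D a]
                             [(a, b1, b2). (a, b) \<leftarrow> D h, (b1, b2) \<leftarrow> D b]"
    and lin_fun_counit: "lin_fun scale eps"
    and counit_left: "(\<Sum>(a, b)\<leftarrow>D h. scale (eps a) b) = h"
    and counit_right: "(\<Sum>(a, b)\<leftarrow>D h. scale (eps b) a) = h"
    and comult_mult: "teq2 scale (D (m x y)) [(m a c, m b d). (a, b) \<leftarrow> D x, (c, d) \<leftarrow> D y]"
    and comult_one: "teq2 scale (D one) [(one, one)]"
    and counit_mult: "eps (m x y) = eps x * eps y"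
    and counit_one: "eps one = 1"
    and linear_antipode: "Vector_Spaces.linear scale scale S"
    and antipode_left: "(\<Sum>(a, b)\<leftarrow>D h. m (S a) b) = scale (eps h) one"
    and antipode_right: "(\<Sum>(a, b)\<leftarrow>D h. m a (S b)) = scale (eps h) one"
  using hopf unfolding hopf_alg_def by auto

lemma linear_ident: "Vector_Spaces.linear scale scale (\<lambda>a. a)"
  unfolding Vector_Spaces.linear_iff using vector_space by auto

lemma linear_mult_left:
  "Vector_Spaces.linear scale scale u \<Longrightarrow> Vector_Spaces.linear scale scale (\<lambda>a. m (u a) y)"
  unfolding Vector_Spaces.linear_iff by (auto simp: mult_add_left mult_scale_left)

lemma linear_mult_right:
  "Vector_Spaces.linear scale scale u \<Longrightarrow> Vector_Spaces.linear scale scale (\<lambda>a. m y (u a))"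
  unfolding Vector_Spaces.linear_iff by (auto simp: mult_add_right mult_scale_right)

lemma linear_antipode_compose:
  "Vector_Spaces.linear scale scale u \<Longrightarrow> Vector_Spaces.linear scale scale (\<lambda>a. S (u a))"
  using linear_antipode unfolding Vector_Spaces.linear_iff by auto

definition tensor_linear :: "('h \<Rightarrow> ('h \<times> 'h) list) \<Rightarrow> bool" where
  "tensor_linear F \<longleftrightarrow> (\<forall>\<beta>. bilinear_form scale \<beta> \<longrightarrow> lin_fun scale (\<lambda>x. pairing (F x) \<beta>))"

lemma tensor_linearD: "tensor_linear F \<Longrightarrow> bilinear_form scale \<beta> \<Longrightarrow> lin_fun scale (\<lambda>x. pairing (F x) \<beta>)"
  unfolding tensor_linear_def by blast

lemma tensor_linear_compose:
  "tensor_linear F \<Longrightarrow> bilinear_form scale \<beta> \<Longrightarrow> Vector_Spaces.linear scale scale u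
    \<Longrightarrow> lin_fun scale (\<lambda>x. pairing (F (u x)) \<beta>)"
  unfolding tensor_linear_def by (auto intro: lin_fun_compose)

lemmas linearity_intros = bilinear_formI lin_fun_pairing[OF vector_space] tensor_linear_compose
  linear_ident linear_mult_left linear_mult_right linear_antipode_compose

lemma tensor_linear_comult: "tensor_linear D"
  unfolding tensor_linear_def
proof (intro allI impI)
  fix \<beta> :: "'h \<Rightarrow> 'h \<Rightarrow> 'k" assume \<beta>: "bilinear_form scale \<beta>"
  have eq: "pairing (D (scale c x + y)) \<beta> = c * pairing (D x) \<beta> + pairing (D y) \<beta>" for c x y
    using pairing_eq_if_teq2[OF vector_space comult_add_scale \<beta>]
    by (simp add: pairing_append pairing_scale_fst[OF \<beta>])
  have scale_one: "scale 1 x = x" for x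
    using vector_space by (simp add: vector_space_def)
  have "pairing (D 0) \<beta> = pairing (D 0) \<beta> + pairing (D 0) \<beta>"
    using eq[of 1 0 0] by (simp add: scale_one)
  then have zero: "pairing (D 0) \<beta> = 0"
    using add_cancel_right_right by blast
  show "lin_fun scale (\<lambda>x. pairing (D x) \<beta>)"
  proof (rule lin_funI[OF vector_space])
    show "pairing (D (x + y)) \<beta> = pairing (D x) \<beta> + pairing (D y) \<beta>" for x y
      using eq[of 1 x y] by (simp add: scale_one)
    show "pairing (D (scale c x)) \<beta> = c * pairing (D x) \<beta>" for c x
      using eq[of c x 0] zero by simp
  qed
qed

lemma pairing_counit_left:
  assumes "lin_fun scale g" shows "pairing (D h) (\<lambda>a b. eps a * g b) = g h"
proof -
  have "g h = g (\<Sum>(a, b)\<leftarrow>D h. scale (eps a) b)" by (simp only: counit_left)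
  also have "\<dots> = pairing (D h) (\<lambda>a b. eps a * g b)"
    unfolding pairing_def by (simp add: lin_fun_sum_list_prod[OF assms] lin_fun_scale[OF assms])
  finally show ?thesis by simp
qed

lemma pairing_counit_right:
  assumes "lin_fun scale g" shows "pairing (D h) (\<lambda>a b. g a * eps b) = g h"
proof -
  have "g h = g (\<Sum>(a, b)\<leftarrow>D h. scale (eps b) a)" by (simp only: counit_right)
  also have "\<dots> = pairing (D h) (\<lambda>a b. g a * eps b)"
    unfolding pairing_def by (simp add: lin_fun_sum_list_prod[OF assms] lin_fun_scale[OF assms] mult.commute)
  finally show ?thesis by simp
qed

lemma pairing_antipode_left:
  assumes "lin_fun scale g" shows "pairing (D h) (\<lambda>a b. g (m (S a) b)) = eps h * g one"
proof -
  have "eps h * g one = g (\<Sum>(a, b)\<leftarrow>D h. m (S a) b)"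
    by (simp add: antipode_left lin_fun_scale[OF assms])
  also have "\<dots> = pairing (D h) (\<lambda>a b. g (m (S a) b))"
    unfolding pairing_def by (simp add: lin_fun_sum_list_prod[OF assms])
  finally show ?thesis by simp
qed

lemma pairing_antipode_right:
  assumes "lin_fun scale g" shows "pairing (D h) (\<lambda>a b. g (m a (S b))) = eps h * g one"
proof -
  have "eps h * g one = g (\<Sum>(a, b)\<leftarrow>D h. m a (S b))"
    by (simp add: antipode_right lin_fun_scale[OF assms])
  also have "\<dots> = pairing (D h) (\<lambda>a b. g (m a (S b)))"
    unfolding pairing_def by (simp add: lin_fun_sum_list_prod[OF assms])
  finally show ?thesis by simp
qed

lemma pairing_coassoc:
  assumes "trilinear_form scale \<tau>"
  shows "pairing (D h) (\<lambda>a b. pairing (D a) (\<lambda>a1 a2. \<tau> a1 a2 b))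
       = pairing (D h) (\<lambda>a b. pairing (D b) (\<lambda>b1 b2. \<tau> a b1 b2))"
  using sum3_eq_if_teq3[OF vector_space coassoc assms]
  unfolding pairing_def by (simp add: sum_list_map_concat case_prod_unfold o_def)

lemma pairing_comult_mult:
  assumes "bilinear_form scale \<beta>"
  shows "pairing (D (m x y)) \<beta> = pairing (D x) (\<lambda>a b. pairing (D y) (\<lambda>c d. \<beta> (m a c) (m b d)))"
  using pairing_eq_if_teq2[OF vector_space comult_mult assms]
  unfolding pairing_def by (simp add: sum_list_map_concat case_prod_unfold o_def)

lemma pairing_comult_one: "bilinear_form scale \<beta> \<Longrightarrow> pairing (D one) \<beta> = \<beta> one one"
  using pairing_eq_if_teq2[OF vector_space comult_one] by simp

definition conv :: "('h \<Rightarrow> ('h \<times> 'h) list) \<Rightarrow> ('h \<Rightarrow> ('h \<times> 'h) list) \<Rightarrow> 'h \<Rightarrow> ('h \<times> 'h) list" where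
  "conv F G h = [(m p r, m q s). (x, y) \<leftarrow> D h, (p, q) \<leftarrow> F x, (r, s) \<leftarrow> G y]"

definition conv_unit :: "'h \<Rightarrow> ('h \<times> 'h) list" where
  "conv_unit h = [(scale (eps h) one, one)]"

definition teq_fun :: "('h \<Rightarrow> ('h \<times> 'h) list) \<Rightarrow> ('h \<Rightarrow> ('h \<times> 'h) list) \<Rightarrow> bool" where
  "teq_fun F G \<longleftrightarrow> (\<forall>h. teq2 scale (F h) (G h))"

lemma teq_funI:
  "(\<And>h \<beta>. bilinear_form scale \<beta> \<Longrightarrow> pairing (F h) \<beta> = pairing (G h) \<beta>) \<Longrightarrow> teq_fun F G"
  unfolding teq_fun_def by (blast intro: teq2_if_pairing_eq)

lemma teq_funD: "teq_fun F G \<Longrightarrow> bilinear_form scale \<beta> \<Longrightarrow> pairing (F h) \<beta> = pairing (G h) \<beta>"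
  unfolding teq_fun_def by (blast intro: pairing_eq_if_teq2[OF vector_space])

lemma teq_fun_refl: "teq_fun F F"
  unfolding teq_fun_def teq2_def by blast

lemma teq_fun_sym: "teq_fun F G \<Longrightarrow> teq_fun G F"
  unfolding teq_fun_def teq2_def by simp

lemma teq_fun_trans [trans]: "teq_fun F G \<Longrightarrow> teq_fun G K \<Longrightarrow> teq_fun F K"
  unfolding teq_fun_def teq2_def by simp

lemma pairing_conv:
  "pairing (conv F G h) \<beta>
     = pairing (D h) (\<lambda>x y. pairing (F x) (\<lambda>p q. pairing (G y) (\<lambda>r s. \<beta> (m p r) (m q s))))"
  unfolding conv_def pairing_def by (simp add: sum_list_map_concat case_prod_unfold o_def)

lemma pairing_conv_unit: "bilinear_form scale \<beta> \<Longrightarrow> pairing (conv_unit h) \<beta> = eps h * \<beta> one one"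
  unfolding conv_unit_def by (simp add: bilinear_form_scale_left)

lemma bilinear_form_mult_pairing:
  assumes \<beta>: "bilinear_form scale \<beta>"
  shows "bilinear_form scale (\<lambda>p q. pairing ys (\<lambda>r s. \<beta> (m p r) (m q s)))"
  by (fast intro: linearity_intros bilinear_form_compose_left[OF \<beta>] bilinear_form_compose_right[OF \<beta>])

lemma tensor_linear_conv:
  assumes F: "tensor_linear F" and G: "tensor_linear G"
  shows "tensor_linear (conv F G)"
  unfolding tensor_linear_def pairing_conv
proof (intro allI impI)
  fix \<beta> :: "'h \<Rightarrow> 'h \<Rightarrow> 'k" assume \<beta>: "bilinear_form scale \<beta>"
  show "lin_fun scale (\<lambda>h. pairing (D h) (\<lambda>x y. pairing (F x) (\<lambda>p q. pairing (G y) (\<lambda>r s. \<beta> (m p r) (m q s)))))"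
    by (fast intro: linearity_intros bilinear_form_compose_left[OF \<beta>] bilinear_form_compose_right[OF \<beta>]
        bilinear_form_mult_pairing[OF \<beta>] tensor_linear_comult F G)
qed

lemma conv_cong:
  assumes F: "teq_fun F F'" and G: "teq_fun G G'"
  shows "teq_fun (conv F G) (conv F' G')"
proof (rule teq_funI)
  fix h and \<beta> :: "'h \<Rightarrow> 'h \<Rightarrow> 'k" assume \<beta>: "bilinear_form scale \<beta>"
  have "bilinear_form scale (\<lambda>r s. \<beta> (m p r) (m q s))" for p q
    by (fast intro: linearity_intros bilinear_form_compose_left[OF \<beta>] bilinear_form_compose_right[OF \<beta>])
  then show "pairing (conv F G h) \<beta> = pairing (conv F' G' h) \<beta>"
    unfolding pairing_conv
    by (simp add: teq_funD[OF G] teq_funD[OF F bilinear_form_mult_pairing[OF \<beta>]])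
qed

lemma conv_assoc:
  assumes F: "tensor_linear F" and G: "tensor_linear G" and K: "tensor_linear K"
  shows "teq_fun (conv (conv F G) K) (conv F (conv G K))"
proof (rule teq_funI)
  fix h and \<beta> :: "'h \<Rightarrow> 'h \<Rightarrow> 'k" assume \<beta>: "bilinear_form scale \<beta>"
  define \<tau> where "\<tau> x1 x2 y = pairing (F x1) (\<lambda>p1 q1. pairing (G x2) (\<lambda>p2 q2.
      pairing (K y) (\<lambda>r s. \<beta> (m p1 (m p2 r)) (m q1 (m q2 s)))))" for x1 x2 y
  have \<tau>: "trilinear_form scale \<tau>"
    unfolding trilinear_form_def \<tau>_def
    by (fast intro: linearity_intros bilinear_form_compose_left[OF \<beta>] bilinear_form_compose_right[OF \<beta>] F G K)
  have "pairing (conv (conv F G) K h) \<beta> = pairing (D h) (\<lambda>x y. pairing (D x) (\<lambda>x1 x2. \<tau> x1 x2 y))"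
    unfolding pairing_conv \<tau>_def by (simp add: mult_assoc)
  also have "\<dots> = pairing (D h) (\<lambda>x y. pairing (D y) (\<lambda>y1 y2. \<tau> x y1 y2))"
    by (rule pairing_coassoc[OF \<tau>])
  also have "\<dots> = pairing (conv F (conv G K) h) \<beta>"
    unfolding pairing_conv \<tau>_def by (simp add: pairing_swap[where xs = "F _"])
  finally show "pairing (conv (conv F G) K h) \<beta> = pairing (conv F (conv G K) h) \<beta>" .
qed

lemma conv_unit_right:
  assumes F: "tensor_linear F" shows "teq_fun (conv F conv_unit) F"
proof (rule teq_funI)
  fix h and \<beta> :: "'h \<Rightarrow> 'h \<Rightarrow> 'k" assume \<beta>: "bilinear_form scale \<beta>"
  have "pairing (conv F conv_unit h) \<beta> = pairing (D h) (\<lambda>x y. pairing (F x) \<beta> * eps y)"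
    unfolding pairing_conv conv_unit_def
    by (simp add: mult_scale_right mult_one_right bilinear_form_scale_left[OF \<beta>] pairing_mult_left mult.commute)
  also have "\<dots> = pairing (F h) \<beta>"
    by (rule pairing_counit_right[OF tensor_linearD[OF F \<beta>]])
  finally show "pairing (conv F conv_unit h) \<beta> = pairing (F h) \<beta>" .
qed

lemma conv_unit_left:
  assumes F: "tensor_linear F" shows "teq_fun (conv conv_unit F) F"
proof (rule teq_funI)
  fix h and \<beta> :: "'h \<Rightarrow> 'h \<Rightarrow> 'k" assume \<beta>: "bilinear_form scale \<beta>"
  have "pairing (conv conv_unit F h) \<beta> = pairing (D h) (\<lambda>x y. eps x * pairing (F y) \<beta>)"
    unfolding pairing_conv conv_unit_def
    by (simp add: mult_scale_left mult_one_left bilinear_form_scale_left[OF \<beta>] pairing_mult_left)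
  also have "\<dots> = pairing (F h) \<beta>"
    by (rule pairing_counit_left[OF tensor_linearD[OF F \<beta>]])
  finally show "pairing (conv conv_unit F h) \<beta> = pairing (F h) \<beta>" .
qed

lemma conv_inverse_unique:
  assumes A: "tensor_linear A" and X: "tensor_linear X" and B: "tensor_linear B"
    and left: "teq_fun (conv A X) conv_unit" and right: "teq_fun (conv X B) conv_unit"
  shows "teq_fun A B"
proof -
  have "teq_fun A (conv A conv_unit)" by (rule teq_fun_sym[OF conv_unit_right[OF A]])
  also have "teq_fun \<dots> (conv A (conv X B))" by (rule conv_cong[OF teq_fun_refl teq_fun_sym[OF right]])
  also have "teq_fun \<dots> (conv (conv A X) B)" by (rule teq_fun_sym[OF conv_assoc[OF A X B]])
  also have "teq_fun \<dots> (conv conv_unit B)" by (rule conv_cong[OF left teq_fun_refl])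
  also have "teq_fun \<dots> B" by (rule conv_unit_left[OF B])
  finally show ?thesis .
qed

end

locale hopf_brace_struct =
  fixes scale :: "'k::field \<Rightarrow> 'h::ab_group_add \<Rightarrow> 'h"
    and m :: "'h \<Rightarrow> 'h \<Rightarrow> 'h" and one :: 'h
    and D D' :: "'h \<Rightarrow> ('h \<times> 'h) list" and eps eps' :: "'h \<Rightarrow> 'k" and S T :: "'h \<Rightarrow> 'h"
  assumes brace: "hopf_brace scale m one D eps S D' eps' T"
begin

sublocale hopf_algebra_struct scale m one D eps S
  using brace unfolding hopf_brace_def by unfold_locales auto

sublocale H': hopf_algebra_struct scale m one D' eps' T
  using brace unfolding hopf_brace_def by unfold_locales auto

lemma pairing_compatibility:
  assumes "trilinear_form scale \<tau>"
  shows "pairing (D' h) (\<lambda>a b. pairing (D b) (\<lambda>c d. \<tau> a c d))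
       = pairing (D h) (\<lambda>x h3. pairing (D x) (\<lambda>h1 h2. pairing (D' h1) (\<lambda>u1 u2.
           pairing (D' h3) (\<lambda>w1 w2. \<tau> (m (m u1 (S h2)) w1) u2 w2))))"
proof -
  have "teq3 scale [(a, c, d). (a, b) \<leftarrow> D' h, (c, d) \<leftarrow> D b]
          [(m (m u1 (S h2)) w1, u2, w2). (x, h3) \<leftarrow> D h, (h1, h2) \<leftarrow> D x,
             (u1, u2) \<leftarrow> D' h1, (w1, w2) \<leftarrow> D' h3]"
    using brace unfolding hopf_brace_def by blast
  from sum3_eq_if_teq3[OF vector_space this assms] show ?thesis
    unfolding pairing_def by (simp add: sum_list_map_concat case_prod_unfold o_def)
qed

lemma counit'_eq_counit: "eps' h = eps h"
proof -
  define \<tau> where "\<tau> a c d = eps' a * eps' c * eps d" for a c d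
  have \<tau>: "trilinear_form scale \<tau>"
    unfolding trilinear_form_def \<tau>_def using lin_fun_counit H'.lin_fun_counit
    by (auto intro: lin_fun_mult_left lin_fun_mult_right)
  have "pairing (D' h) (\<lambda>a b. pairing (D b) (\<lambda>c d. \<tau> a c d)) = pairing (D' h) (\<lambda>a b. eps' a * eps' b)"
    unfolding \<tau>_def by (simp add: mult.assoc pairing_mult_left pairing_counit_right[OF H'.lin_fun_counit])
  also have "\<dots> = eps' h"
    by (rule H'.pairing_counit_left[OF H'.lin_fun_counit])
  finally have lhs: "pairing (D' h) (\<lambda>a b. pairing (D b) (\<lambda>c d. \<tau> a c d)) = eps' h" .
  have inner: "pairing (D' h3) (\<lambda>w1 w2. \<tau> (m (m u1 (S h2)) w1) u2 w2)
      = eps' u1 * eps' u2 * (eps' (S h2) * eps h3)" for u1 u2 h2 h3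
  proof -
    have "pairing (D' h3) (\<lambda>w1 w2. \<tau> (m (m u1 (S h2)) w1) u2 w2)
        = eps' u1 * eps' u2 * eps' (S h2) * pairing (D' h3) (\<lambda>w1 w2. eps' w1 * eps w2)"
      unfolding \<tau>_def H'.counit_mult pairing_mult_left[symmetric]
      by (rule pairing_cong) (simp add: mult_ac)
    then show ?thesis
      by (simp add: H'.pairing_counit_left[OF lin_fun_counit] mult.assoc)
  qed
  have "pairing (D h) (\<lambda>x h3. pairing (D x) (\<lambda>h1 h2. pairing (D' h1) (\<lambda>u1 u2.
          pairing (D' h3) (\<lambda>w1 w2. \<tau> (m (m u1 (S h2)) w1) u2 w2))))
      = pairing (D h) (\<lambda>x h3. pairing (D x) (\<lambda>h1 h2. eps' (m h1 (S h2)) * eps h3))"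
    by (simp only: inner pairing_mult_right H'.pairing_counit_left[OF H'.lin_fun_counit])
      (simp add: H'.counit_mult mult.assoc[symmetric] pairing_mult_right)
  also have "\<dots> = pairing (D h) (\<lambda>x h3. eps x * eps h3)"
    by (simp add: pairing_mult_right pairing_antipode_right[OF H'.lin_fun_counit] H'.counit_one)
  also have "\<dots> = eps h"
    by (rule pairing_counit_left[OF lin_fun_counit])
  finally show ?thesis
    using lhs pairing_compatibility[OF \<tau>] by simp
qed

definition S_one :: "'h \<Rightarrow> ('h \<times> 'h) list" where
  "S_one x = [(S x, one)]"

definition id_one :: "'h \<Rightarrow> ('h \<times> 'h) list" where
  "id_one x = [(x, one)]"

definition comult'_id_S :: "'h \<Rightarrow> ('h \<times> 'h) list" where
  "comult'_id_S x = [(u, S v). (u, v) \<leftarrow> D' x]"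

definition comult'_S :: "'h \<Rightarrow> ('h \<times> 'h) list" where
  "comult'_S x = D' (S x)"

lemma pairing_comult'_id_S: "pairing (comult'_id_S x) \<beta> = pairing (D' x) (\<lambda>u v. \<beta> u (S v))"
  unfolding comult'_id_S_def pairing_def by (simp add: case_prod_unfold o_def)

lemma tensor_linear_S_one: "tensor_linear S_one"
  unfolding tensor_linear_def S_one_def
  by (simp add: bilinear_form_compose_left linear_antipode)

lemma tensor_linear_id_one: "tensor_linear id_one"
  unfolding tensor_linear_def id_one_def bilinear_form_def by simp

lemma tensor_linear_comult'_S: "tensor_linear comult'_S"
  unfolding tensor_linear_def comult'_S_def
  using tensor_linear_compose[OF H'.tensor_linear_comult _ linear_antipode] by blast

lemma tensor_linear_comult'_id_S: "tensor_linear comult'_id_S"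
  unfolding tensor_linear_def pairing_comult'_id_S
proof (intro allI impI)
  fix \<beta> :: "'h \<Rightarrow> 'h \<Rightarrow> 'k" assume \<beta>: "bilinear_form scale \<beta>"
  have "bilinear_form scale (\<lambda>u v. \<beta> u (S v))"
  proof (rule bilinear_formI)
    show "lin_fun scale (\<lambda>v. \<beta> u (S v))" for u
      by (rule bilinear_form_compose_right[OF \<beta> linear_antipode])
    show "lin_fun scale (\<lambda>u. \<beta> u (S v))" for v
      using \<beta> by (simp add: bilinear_form_def)
  qed
  then show "lin_fun scale (\<lambda>x. pairing (D' x) (\<lambda>u v. \<beta> u (S v)))"
    by (rule H'.tensor_linearD[OF H'.tensor_linear_comult])
qed

lemma comult'_conv_comult'_S: "teq_fun (conv D' comult'_S) conv_unit"
proof (rule teq_funI)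
  fix h and \<beta> :: "'h \<Rightarrow> 'h \<Rightarrow> 'k" assume \<beta>: "bilinear_form scale \<beta>"
  have "pairing (conv D' comult'_S h) \<beta> = pairing (D h) (\<lambda>x y. pairing (D' (m x (S y))) \<beta>)"
    unfolding pairing_conv comult'_S_def by (simp add: H'.pairing_comult_mult[OF \<beta>])
  also have "\<dots> = eps h * pairing (D' one) \<beta>"
    by (rule pairing_antipode_right[OF H'.tensor_linearD[OF H'.tensor_linear_comult \<beta>]])
  also have "\<dots> = pairing (conv_unit h) \<beta>"
    by (simp add: H'.pairing_comult_one[OF \<beta>] pairing_conv_unit[OF \<beta>])
  finally show "pairing (conv D' comult'_S h) \<beta> = pairing (conv_unit h) \<beta>" .
qed

lemma S_one_conv_id_one: "teq_fun (conv S_one id_one) conv_unit"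
proof (rule teq_funI)
  fix h and \<beta> :: "'h \<Rightarrow> 'h \<Rightarrow> 'k" assume \<beta>: "bilinear_form scale \<beta>"
  have "pairing (conv S_one id_one h) \<beta> = pairing (D h) (\<lambda>x y. \<beta> (m (S x) y) one)"
    unfolding pairing_conv S_one_def id_one_def by (simp add: mult_one_right)
  also have "\<dots> = eps h * \<beta> one one"
    using \<beta> by (simp add: pairing_antipode_left[of "\<lambda>z. \<beta> z one"] bilinear_form_def)
  finally show "pairing (conv S_one id_one h) \<beta> = pairing (conv_unit h) \<beta>"
    by (simp add: pairing_conv_unit[OF \<beta>])
qed

lemma compatibility_conv: "teq_fun (conv (conv comult'_id_S S_one) D') id_one"
proof (rule teq_funI)
  fix z and \<beta> :: "'h \<Rightarrow> 'h \<Rightarrow> 'k" assume \<beta>: "bilinear_form scale \<beta>"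
  define \<tau> where "\<tau> a c d = \<beta> a (m (S c) d)" for a c d
  have \<tau>: "trilinear_form scale \<tau>"
    unfolding trilinear_form_def \<tau>_def
    by (fast intro: linearity_intros bilinear_form_compose_left[OF \<beta>] bilinear_form_compose_right[OF \<beta>])
  have "pairing (conv (conv comult'_id_S S_one) D' z) \<beta>
      = pairing (D z) (\<lambda>x h3. pairing (D x) (\<lambda>h1 h2. pairing (D' h1) (\<lambda>u1 u2.
          pairing (D' h3) (\<lambda>w1 w2. \<tau> (m (m u1 (S h2)) w1) u2 w2))))"
    unfolding pairing_conv pairing_comult'_id_S S_one_def \<tau>_def by (simp add: mult_one_right)
  also have "\<dots> = pairing (D' z) (\<lambda>a b. pairing (D b) (\<lambda>c d. \<tau> a c d))"
    by (rule pairing_compatibility[OF \<tau>, symmetric])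
  also have "\<dots> = pairing (D' z) (\<lambda>a b. \<beta> a one * eps' b)"
    unfolding \<tau>_def using \<beta>
    by (simp add: pairing_antipode_left bilinear_form_def counit'_eq_counit mult.commute)
  also have "\<dots> = pairing (id_one z) \<beta>"
    using \<beta> unfolding id_one_def bilinear_form_def by (simp add: H'.pairing_counit_right)
  finally show "pairing (conv (conv comult'_id_S S_one) D' z) \<beta> = pairing (id_one z) \<beta>" .
qed

lemma comult'_S_eq: "teq_fun comult'_S (conv (conv S_one comult'_id_S) S_one)"
proof -
  let ?R = "conv (conv S_one comult'_id_S) S_one"
  have R: "tensor_linear ?R"
    by (intro tensor_linear_conv tensor_linear_S_one tensor_linear_comult'_id_S)
  have "teq_fun (conv ?R D') (conv (conv S_one comult'_id_S) (conv S_one D'))"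
    by (intro conv_assoc tensor_linear_conv tensor_linear_S_one tensor_linear_comult'_id_S
        H'.tensor_linear_comult)
  also have "teq_fun \<dots> (conv S_one (conv comult'_id_S (conv S_one D')))"
    by (intro conv_assoc tensor_linear_conv tensor_linear_S_one tensor_linear_comult'_id_S
        H'.tensor_linear_comult)
  also have "teq_fun \<dots> (conv S_one (conv (conv comult'_id_S S_one) D'))"
    by (intro conv_cong teq_fun_refl teq_fun_sym[OF conv_assoc] tensor_linear_S_one
        tensor_linear_comult'_id_S H'.tensor_linear_comult)
  also have "teq_fun \<dots> (conv S_one id_one)"
    by (rule conv_cong[OF teq_fun_refl compatibility_conv])
  also have "teq_fun \<dots> conv_unit"
    by (rule S_one_conv_id_one)
  finally have "teq_fun (conv ?R D') conv_unit" .
  then have "teq_fun ?R comult'_S"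
    by (rule conv_inverse_unique[OF R H'.tensor_linear_comult tensor_linear_comult'_S _
          comult'_conv_comult'_S])
  then show ?thesis by (rule teq_fun_sym)
qed

lemma comult'_S_conv_id_one: "teq_fun (conv comult'_S id_one) (conv S_one comult'_id_S)"
proof -
  have KM: "tensor_linear (conv S_one comult'_id_S)"
    by (intro tensor_linear_conv tensor_linear_S_one tensor_linear_comult'_id_S)
  have "teq_fun (conv comult'_S id_one) (conv (conv (conv S_one comult'_id_S) S_one) id_one)"
    by (rule conv_cong[OF comult'_S_eq teq_fun_refl])
  also have "teq_fun \<dots> (conv (conv S_one comult'_id_S) (conv S_one id_one))"
    by (rule conv_assoc[OF KM tensor_linear_S_one tensor_linear_id_one])
  also have "teq_fun \<dots> (conv (conv S_one comult'_id_S) conv_unit)"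
    by (rule conv_cong[OF teq_fun_refl S_one_conv_id_one])
  also have "teq_fun \<dots> (conv S_one comult'_id_S)"
    by (rule conv_unit_right[OF KM])
  finally show ?thesis .
qed

lemma conv_comult'_S_id_one:
  "conv comult'_S id_one h = [(m u b, v). (a, b) \<leftarrow> D h, (u, v) \<leftarrow> D' (S a)]"
  unfolding conv_def comult'_S_def id_one_def by (simp add: mult_one_right case_prod_unfold)

lemma conv_S_one_comult'_id_S:
  "conv S_one comult'_id_S h = [(m (S a) c, S d). (a, b) \<leftarrow> D h, (c, d) \<leftarrow> D' b]"
  unfolding conv_def S_one_def comult'_id_S_def by (simp add: mult_one_left case_prod_unfold o_def)

end

theorem lemma2p4:
  fixes scale :: "'k::field \<Rightarrow> 'h::ab_group_add \<Rightarrow> 'h"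
    and m :: "'h \<Rightarrow> 'h \<Rightarrow> 'h" and one :: 'h
    and D D' :: "'h \<Rightarrow> ('h \<times> 'h) list" and eps eps' :: "'h \<Rightarrow> 'k" and S T :: "'h \<Rightarrow> 'h"
  assumes "hopf_brace scale m one D eps S D' eps' T"
  shows "\<forall>h. teq2 scale
           [(m u b, v). (a,b) \<leftarrow> D h, (u,v) \<leftarrow> D' (S a)]
           [(m (S a) c, S d). (a,b) \<leftarrow> D h, (c,d) \<leftarrow> D' b]"
proof -
  interpret hopf_brace_struct scale m one D D' eps eps' S T
    by (rule hopf_brace_struct.intro) (fact assms)
  show ?thesis
    using comult'_S_conv_id_one
    unfolding teq_fun_def conv_comult'_S_id_one conv_S_one_comult'_id_S .
qed

end
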